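(* Consider $N$ players $\mathcal{N}=\{1,\dots,N\}$. Player $i$ has decision variable $x_i\in\mathcal{X}_i\subset\mathbb{R}^{m_i}$, $m:=\sum_i m_i$, $\mathcal{X}:=\prod_i\mathcal{X}_i$, and differentiable objective $J_i:\mathbb{R}^m\to\mathbb{R}$. For each ordered pair $i\neq j$ let $\Theta_{i,j}\subseteq\mathbb{R}^d$, $\Theta:=\prod_{i\neq j}\Theta_{i,j}$, and let $\gamma_i^j:\mathcal{X}_i\times\Theta_{i,j}\to\mathcal{X}_j$ be differentiable in $x_i$; write $\theta_i=(\theta_{i,j})_{j\neq i}$, $\gamma_i^{-i}(x_i;\theta_i)=(\gamma_i^j(x_i;\theta_{i,j}))_{j\neq i}$. Let $\mathscr{F}:\mathcal{X}\to\mathbb{R}$, and let $(x^*,\theta^* )$ be a solution of $$\min_{\theta\in\Theta,\,x\in\mathcal{X}}\ \mathscr{F}(x)\quad\text{s.t.}\quad \nabla_i J_i(x_i,\gamma_i^{-i}(x_i;\theta_i))+\nabla_{-i}J_i(x_i,\gamma_i^{-i}(x_i;\theta_i))^\top\nabla_i\gamma_i^{-i}(x_i;\theta_i)=0\ \forall i,\qquad \gamma_i^j(x_i;\theta_{i,j})=x_j\ \forall i\neq j.$$ Assume that for each player $i$, the conjectured objective $x_i\mapsto J_i(x_i,\gamma_i^{-i}(x_i;\theta_i^* ))$ is pseudo-convex on $\mathcal{X}_i$. Then $x^*$ is an equilibrium of the game in which each player $i$ independently solves $\min_{x_i}J_i(x_i,\gamma_i^{-i}(x_i;\theta_i^* ))$;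 that is, for every $i$, $x_i^*$ is a global minimizer of $x_i\mapsto J_i(x_i,\gamma_i^{-i}(x_i;\theta_i^* ))$, so the equilibrium $x^N(\theta^* )$ of this game coincides with $x^*$.
   Context: A differentiable function $f:\mathcal{Y}\subseteq\mathbb{R}^k\to\mathbb{R}$ is pseudo-convex if for all $a,b\in\mathcal{Y}$, $\nabla f(a)^\top(b-a)\ge 0$ implies $f(b)\ge f(a)$. $\nabla_i$ denotes the partial derivative with respect to $x_i$, and $\nabla_{-i}J_i$ the stack of partial derivatives of $J_i$ with respect to $x_j$, $j\neq i$. *)

theory Defs
  imports "HOL-Analysis.Analysis"
begin

text \<open>Model: the joint decision space R^m is real^'c, where the finite type 'c indexes
  all m coordinates; blk assigns each coordinate to its player (players = finite type 'p,
  N = CARD('p)). Player i's space R^{m_i} is the coordinate subspace blk_space blk i.\<close>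

definition blk_space :: "('c::finite \<Rightarrow> 'p) \<Rightarrow> 'p \<Rightarrow> (real^'c) set" where
  "blk_space blk i = {v. \<forall>c. blk c \<noteq> i \<longrightarrow> v $ c = 0}"

definition blk_proj :: "('c::finite \<Rightarrow> 'p) \<Rightarrow> 'p \<Rightarrow> real^'c \<Rightarrow> real^'c" where
  "blk_proj blk i x = (\<chi> c. if blk c = i then x $ c else 0)"

text \<open>The joint point (x_i, gamma_i^{-i}(x_i; theta_i)).\<close>
definition conj_point ::
  "('c::finite \<Rightarrow> 'p::finite) \<Rightarrow> ('p \<Rightarrow> 'p \<Rightarrow> real^'c \<Rightarrow> real^'d \<Rightarrow> real^'c)
     \<Rightarrow> 'p \<Rightarrow> ('p \<Rightarrow> real^'d) \<Rightarrow> real^'c \<Rightarrow> real^'c" where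
  "conj_point blk \<gamma> i \<theta>i xi =
     blk_proj blk i xi + (\<Sum>j\<in>-{i}. blk_proj blk j (\<gamma> i j xi (\<theta>i j)))"

text \<open>Pseudo-convexity of a differentiable f on Y, where f is a function on the
  Euclidean space E (here a coordinate subspace); the gradient pairing
  grad f(a)^T (b-a) is the Frechet derivative of f (on E) at a applied to b - a.\<close>
definition pseudo_convex_on :: "'a::real_normed_vector set \<Rightarrow> 'a set \<Rightarrow> ('a \<Rightarrow> real) \<Rightarrow> bool" where
  "pseudo_convex_on E Y f \<longleftrightarrow> Y \<subseteq> E \<and> (\<forall>a\<in>Y. f differentiable (at a within E)) \<and>
     (\<forall>a\<in>Y. \<forall>b\<in>Y. frechet_derivative f (at a within E) (b - a) \<ge> 0 \<longrightarrow> f b \<ge> f a)"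

text \<open>Feasible set of the bilevel problem: theta in Theta, x in X = prod X_i,
  the stationarity constraint
  grad_i J_i + grad_{-i} J_i^T grad_i gamma_i^{-i} = 0 (written as a linear functional on R^{m_i}),
  and the consistency constraints gamma_i^j(x_i; theta_ij) = x_j.\<close>
definition feasible ::
  "('c::finite \<Rightarrow> 'p::finite) \<Rightarrow> ('p \<Rightarrow> (real^'c) set) \<Rightarrow> ('p \<Rightarrow> 'p \<Rightarrow> (real^'d::finite) set)
     \<Rightarrow> ('p \<Rightarrow> real^'c \<Rightarrow> real) \<Rightarrow> ('p \<Rightarrow> 'p \<Rightarrow> real^'c \<Rightarrow> real^'d \<Rightarrow> real^'c)
     \<Rightarrow> real^'c \<Rightarrow> ('p \<Rightarrow> 'p \<Rightarrow> real^'d) \<Rightarrow> bool" where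
  "feasible blk Xs Th J \<gamma> x \<theta> \<longleftrightarrow>
     (\<forall>i j. i \<noteq> j \<longrightarrow> \<theta> i j \<in> Th i j) \<and>
     (\<forall>i. blk_proj blk i x \<in> Xs i) \<and>
     (\<forall>i. \<forall>v\<in>blk_space blk i.
        frechet_derivative (J i) (at (conj_point blk \<gamma> i (\<theta> i) (blk_proj blk i x))) (blk_proj blk i v)
        + (\<Sum>j\<in>-{i}. frechet_derivative (J i) (at (conj_point blk \<gamma> i (\<theta> i) (blk_proj blk i x)))
             (blk_proj blk j
               (frechet_derivative (\<lambda>y. \<gamma> i j y (\<theta> i j)) (at (blk_proj blk i x) within blk_space blk i) v)))
        = 0) \<and>
     (\<forall>i j. i \<noteq> j \<longrightarrow> \<gamma> i j (blk_proj blk i x) (\<theta> i j) = blk_proj blk j x)"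

end

theory Submission
  imports Defs
begin

text \<open>At a feasible point the stationarity constraint of player i says precisely that the
  chain-rule derivative of the conjectured objective y \<mapsto> J i (y, \<gamma>(y; \<theta>s i)) vanishes on
  player i's coordinate subspace. For a pseudo-convex function a stationary point is a global
  minimizer, so blk_proj blk i xs minimizes the conjectured objective over Xs i.\<close>

lemma has_derivative_within_subspace_unique:
  fixes f :: "'a::real_normed_vector \<Rightarrow> 'b::real_normed_vector"
  assumes f1: "(f has_derivative f1) (at a within S)"
    and f2: "(f has_derivative f2) (at a within S)"
    and S: "subspace S" and a: "a \<in> S" and v: "v \<in> S"
  shows "f1 v = f2 v"
proof -
  let ?p = "\<lambda>t::real. a + t *\<^sub>R v"
  have p: "(?p has_derivative (\<lambda>t. t *\<^sub>R v)) (at 0)"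
    by (auto intro!: derivative_eq_intros)
  have line_in_S: "range ?p \<subseteq> S"
    using S a v by (auto intro!: subspace_add subspace_scale)
  have "((f \<circ> ?p) has_derivative (f\<^sub>k \<circ> (\<lambda>t. t *\<^sub>R v))) (at 0)"
    if "(f has_derivative f\<^sub>k) (at a within S)" for f\<^sub>k
  proof -
    have "(f has_derivative f\<^sub>k) (at (?p 0) within range ?p)"
      using has_derivative_subset[OF that line_in_S] by simp
    then show ?thesis using diff_chain_within[OF p] by simp
  qed
  from this[OF f1] this[OF f2]
  have "f1 \<circ> (\<lambda>t. t *\<^sub>R v) = f2 \<circ> (\<lambda>t. t *\<^sub>R v)"
    by (rule has_derivative_unique)
  then show ?thesis by (metis comp_apply scaleR_one)
qed

lemma pseudo_convex_on_stationary_imp_minimum: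
  assumes pc: "pseudo_convex_on E Y f" and E: "subspace E"
    and a: "a \<in> Y" and b: "b \<in> Y"
    and f': "(f has_derivative f') (at a within E)"
    and stationary: "\<forall>v\<in>E. f' v = 0"
  shows "f a \<le> f b"
proof -
  have YE: "Y \<subseteq> E" and "f differentiable (at a within E)"
    using pc a unfolding pseudo_convex_on_def by auto
  then have "(f has_derivative frechet_derivative f (at a within E)) (at a within E)"
    by (simp add: frechet_derivative_works)
  moreover have "b - a \<in> E"
    using YE a b E by (auto intro: subspace_diff)
  ultimately have "frechet_derivative f (at a within E) (b - a) = f' (b - a)"
    using has_derivative_within_subspace_unique f' E YE a by blast
  with stationary \<open>b - a \<in> E\<close> pc a b show ?thesis
    unfolding pseudo_convex_on_def by auto
qed

lemma bounded_linear_blk_proj: "bounded_linear (blk_proj blk i)"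
proof -
  have "linear (blk_proj blk i)"
    by (rule linearI) (auto simp: blk_proj_def vec_eq_iff)
  then show ?thesis by (simp add: linear_conv_bounded_linear)
qed

lemma subspace_blk_space: "subspace (blk_space blk i)"
  unfolding subspace_def blk_space_def by auto

lemma has_derivative_conj_point:
  assumes "\<And>j. j \<noteq> i \<Longrightarrow> ((\<lambda>y. \<gamma> i j y (\<theta>i j)) has_derivative D\<gamma> j) (at a within S)"
  shows "(conj_point blk \<gamma> i \<theta>i has_derivative
           (\<lambda>v. blk_proj blk i v + (\<Sum>j\<in>-{i}. blk_proj blk j (D\<gamma> j v)))) (at a within S)"
  unfolding conj_point_def[abs_def]
  using assms
  by (auto intro!: has_derivative_add has_derivative_sum
      bounded_linear_imp_has_derivative bounded_linear_blk_proj
      bounded_linear.has_derivative[OF bounded_linear_blk_proj])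

lemma conjectured_objective_has_derivative:
  fixes J :: "real^'c::finite \<Rightarrow> real" and blk :: "'c \<Rightarrow> 'p::finite"
    and \<gamma> :: "'p \<Rightarrow> 'p \<Rightarrow> real^'c \<Rightarrow> real^'d \<Rightarrow> real^'c" and i :: 'p
    and \<theta>i :: "'p \<Rightarrow> real^'d" and a :: "real^'c" and S :: "(real^'c) set"
  defines "c \<equiv> conj_point blk \<gamma> i \<theta>i a"
    and "D\<gamma> \<equiv> \<lambda>j. frechet_derivative (\<lambda>y. \<gamma> i j y (\<theta>i j)) (at a within S)"
  assumes J: "J differentiable (at c)"
    and \<gamma>: "\<forall>j. j \<noteq> i \<longrightarrow> (\<lambda>y. \<gamma> i j y (\<theta>i j)) differentiable (at a within S)"
  shows "((\<lambda>y. J (conj_point blk \<gamma> i \<theta>i y)) has_derivative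
           (\<lambda>v. frechet_derivative J (at c) (blk_proj blk i v)
              + (\<Sum>j\<in>-{i}. frechet_derivative J (at c) (blk_proj blk j (D\<gamma> j v)))))
         (at a within S)"
proof -
  let ?DJ = "frechet_derivative J (at c)"
  have DJ: "(J has_derivative ?DJ) (at c)"
    using J by (simp add: frechet_derivative_works)
  have "(conj_point blk \<gamma> i \<theta>i has_derivative
           (\<lambda>v. blk_proj blk i v + (\<Sum>j\<in>-{i}. blk_proj blk j (D\<gamma> j v)))) (at a within S)"
    using \<gamma> by (auto intro: has_derivative_conj_point simp: D\<gamma>_def frechet_derivative_works)
  from has_derivative_compose[OF this DJ[unfolded c_def]]
  show ?thesis
    using has_derivative_linear[OF DJ]
    by (simp add: o_def linear_add linear_sum c_def)
qed

theorem theorem2: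
  fixes blk :: "'c::finite \<Rightarrow> 'p::finite"
    and Xs :: "'p \<Rightarrow> (real^'c) set"
    and J :: "'p \<Rightarrow> real^'c \<Rightarrow> real"
    and Th :: "'p \<Rightarrow> 'p \<Rightarrow> (real^'d::finite) set"
    and \<gamma> :: "'p \<Rightarrow> 'p \<Rightarrow> real^'c \<Rightarrow> real^'d \<Rightarrow> real^'c"
    and F :: "real^'c \<Rightarrow> real"
    and xs :: "real^'c"
    and \<theta>s :: "'p \<Rightarrow> 'p \<Rightarrow> real^'d"
  assumes X_sub: "\<forall>i. Xs i \<subseteq> blk_space blk i"
    and J_diff: "\<forall>i z. J i differentiable (at z)"
    and gamma: "\<forall>i j. i \<noteq> j \<longrightarrow> (\<forall>t\<in>Th i j. \<forall>y\<in>Xs i.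
                   \<gamma> i j y t \<in> Xs j \<and> (\<lambda>y. \<gamma> i j y t) differentiable (at y within blk_space blk i))"
    and feas: "feasible blk Xs Th J \<gamma> xs \<theta>s"
    and opt: "\<forall>x \<theta>. feasible blk Xs Th J \<gamma> x \<theta> \<longrightarrow> F xs \<le> F x"
    and pcvx: "\<forall>i. pseudo_convex_on (blk_space blk i) (Xs i)
                     (\<lambda>y. J i (conj_point blk \<gamma> i (\<theta>s i) y))"
  shows "\<forall>i. \<forall>y\<in>Xs i. J i (conj_point blk \<gamma> i (\<theta>s i) (blk_proj blk i xs))
                        \<le> J i (conj_point blk \<gamma> i (\<theta>s i) y)"
proof (intro allI ballI)
  fix i y assume y: "y \<in> Xs i"
  have a: "blk_proj blk i xs \<in> Xs i"
    using feas by (simp add: feasible_def)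
  have \<gamma>_diff: "\<forall>j. j \<noteq> i \<longrightarrow>
      (\<lambda>y. \<gamma> i j y (\<theta>s i j)) differentiable (at (blk_proj blk i xs) within blk_space blk i)"
    using a gamma feas by (simp add: feasible_def)
  note stationary =
    feas[unfolded feasible_def, THEN conjunct2, THEN conjunct2, THEN conjunct1, THEN spec[of _ i]]
  note derivative = conjectured_objective_has_derivative[of "J i" blk \<gamma> i "\<theta>s i",
      OF J_diff[rule_format] \<gamma>_diff]
  from pseudo_convex_on_stationary_imp_minimum[OF pcvx[rule_format] subspace_blk_space a y
      derivative stationary]
  show "J i (conj_point blk \<gamma> i (\<theta>s i) (blk_proj blk i xs))
          \<le> J i (conj_point blk \<gamma> i (\<theta>s i) y)" .
qed

end
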